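(* Let $\kappa$ be an infinite cardinal and let $\mathbb P$ be a forcing notion satisfying Property B$(\kappa)$. Then forcing with $\mathbb P$ preserves $\kappa^+$ (i.e. $(\kappa^+)^{\mathbf V}$ remains a cardinal in $\mathbf V[G]$ for every $\mathbb P$-generic $G$).
   Context: Convention: $p\le q$ means $q$ is the stronger condition. A forcing notion $\mathbb P=(P,\le)$ satisfies Property B$(\kappa)$ if: (1) there is a sequence $\langle \le_\zeta:\zeta<\kappa\rangle$ of partial orders on $P$ with $\le_0=\le$ and $\xi<\zeta\Rightarrow \le_\xi\supseteq\le_\zeta$; (2) for limit $\delta\in(0,\kappa)$, $\le_\delta=\bigcap_{\zeta<\delta}\le_\zeta$; (3) (Fusion) for a limit ordinal $\delta\le\kappa$, a $\delta$-fusion sequence is a sequence $\langle p_\zeta:\zeta<\delta\rangle$ with $p_\zeta\le_\zeta p_{\zeta+1}$ for every $\zeta$ and $p_\zeta\le p_\varepsilon$ whenever $\varepsilon<\delta$ is limit and $\zeta<\varepsilon$; Fusion states that for every limit $\delta\le\kappa$ and every $\delta$-fusion sequence there is $q$ with $p_\zeta\le_\zeta q$ for all $\zeta<\delta$; (4) (Mastering $\kappa$) for every dense $\mathcal D\subseteq P$, every $p\in P$ and every $\zeta<\kappa$ there are $q$ with $p\le_\zeta q$ and $\mathcal D'\subseteq\mathcal D$ with $|\mathcal D'|\le\kappa$ such that $\mathcal D'$ is predense above $q$. *)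

theory Defs
  imports Main
begin

text \<open>Ordinals below kappa are the elements of a wellorder type 'k whose order is a
cardinal order (initial ordinal) of the cardinality kappa.\<close>

definition kzero :: "'k::wellorder" where
  "kzero = (LEAST z. True)"

definition ksucc :: "'k::wellorder \<Rightarrow> 'k" where
  "ksucc z = (LEAST e. z < e)"

definition klimit :: "'k::wellorder \<Rightarrow> bool" where
  "klimit d \<longleftrightarrow> d \<noteq> kzero \<and> (\<forall>z. z < d \<longrightarrow> (\<exists>e. z < e \<and> e < d))"

definition po_on :: "'p set \<Rightarrow> ('p \<Rightarrow> 'p \<Rightarrow> bool) \<Rightarrow> bool" where
  "po_on P R \<longleftrightarrow> (\<forall>x\<in>P. R x x)
     \<and> (\<forall>x\<in>P. \<forall>y\<in>P. \<forall>z\<in>P. R x y \<longrightarrow> R y z \<longrightarrow> R x z)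
     \<and> (\<forall>x\<in>P. \<forall>y\<in>P. R x y \<longrightarrow> R y x \<longrightarrow> x = y)"

text \<open>Convention: leq p q means q is the stronger condition.\<close>

definition compatible :: "'p set \<Rightarrow> ('p \<Rightarrow> 'p \<Rightarrow> bool) \<Rightarrow> 'p \<Rightarrow> 'p \<Rightarrow> bool" where
  "compatible P leq p q \<longleftrightarrow> (\<exists>s\<in>P. leq p s \<and> leq q s)"

definition dense :: "'p set \<Rightarrow> ('p \<Rightarrow> 'p \<Rightarrow> bool) \<Rightarrow> 'p set \<Rightarrow> bool" where
  "dense P leq D \<longleftrightarrow> D \<subseteq> P \<and> (\<forall>p\<in>P. \<exists>d\<in>D. leq p d)"

definition predense_above :: "'p set \<Rightarrow> ('p \<Rightarrow> 'p \<Rightarrow> bool) \<Rightarrow> 'p set \<Rightarrow> 'p \<Rightarrow> bool" where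
  "predense_above P leq D q \<longleftrightarrow>
     (\<forall>r\<in>P. leq q r \<longrightarrow> (\<exists>d\<in>D. compatible P leq r d))"

text \<open>Delta-fusion sequence, where the index set I is {z. z < d} for a limit d < kappa,
or UNIV for d = kappa.\<close>

definition fusion_seq :: "'p set \<Rightarrow> ('p \<Rightarrow> 'p \<Rightarrow> bool) \<Rightarrow> ('k::wellorder \<Rightarrow> 'p \<Rightarrow> 'p \<Rightarrow> bool)
    \<Rightarrow> 'k set \<Rightarrow> ('k \<Rightarrow> 'p) \<Rightarrow> bool" where
  "fusion_seq P leq lz I p \<longleftrightarrow>
     (\<forall>z\<in>I. p z \<in> P)
     \<and> (\<forall>z\<in>I. lz z (p z) (p (ksucc z)))
     \<and> (\<forall>e\<in>I. klimit e \<longrightarrow> (\<forall>z. z < e \<longrightarrow> leq (p z) (p e)))"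

definition fusion_ok :: "'p set \<Rightarrow> ('p \<Rightarrow> 'p \<Rightarrow> bool) \<Rightarrow> ('k::wellorder \<Rightarrow> 'p \<Rightarrow> 'p \<Rightarrow> bool)
    \<Rightarrow> 'k set \<Rightarrow> bool" where
  "fusion_ok P leq lz I \<longleftrightarrow>
     (\<forall>p. fusion_seq P leq lz I p \<longrightarrow> (\<exists>q\<in>P. \<forall>z\<in>I. lz z (p z) q))"

text \<open>Property B(kappa); kappa is represented by the wellorder type 'k.
|D'| <= kappa is expressed as: D' is contained in the range of a map from kappa.\<close>

definition propertyB :: "'p set \<Rightarrow> ('p \<Rightarrow> 'p \<Rightarrow> bool) \<Rightarrow> ('k::wellorder \<Rightarrow> 'p \<Rightarrow> 'p \<Rightarrow> bool) \<Rightarrow> bool" where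
  "propertyB P leq lz \<longleftrightarrow>
     po_on P leq
     \<comment> \<open>(1)\<close>
     \<and> (\<forall>z. po_on P (lz z))
     \<and> (\<forall>x\<in>P. \<forall>y\<in>P. lz kzero x y \<longleftrightarrow> leq x y)
     \<and> (\<forall>a b. a < b \<longrightarrow> (\<forall>x\<in>P. \<forall>y\<in>P. lz b x y \<longrightarrow> lz a x y))
     \<comment> \<open>(2)\<close>
     \<and> (\<forall>d. klimit d \<longrightarrow> (\<forall>x\<in>P. \<forall>y\<in>P. lz d x y \<longleftrightarrow> (\<forall>z. z < d \<longrightarrow> lz z x y)))
     \<comment> \<open>(3) fusion, for limit d < kappa and for d = kappa\<close>
     \<and> (\<forall>d. klimit d \<longrightarrow> fusion_ok P leq lz {z. z < d})
     \<and> fusion_ok P leq lz UNIV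
     \<comment> \<open>(4) mastering kappa\<close>
     \<and> (\<forall>D p z. dense P leq D \<longrightarrow> p \<in> P \<longrightarrow>
          (\<exists>q\<in>P. lz z p q \<and> (\<exists>D' f. D' \<subseteq> D \<and> D' \<subseteq> range (f :: 'k \<Rightarrow> 'p)
                                   \<and> predense_above P leq D' q)))"

text \<open>A P-name for a function from kappa onto C, forced by p, coded by
h alpha q = Some beta meaning q forces f(alpha) = beta.\<close>

definition collapse_name :: "'p set \<Rightarrow> ('p \<Rightarrow> 'p \<Rightarrow> bool) \<Rightarrow> 'p \<Rightarrow> 'c set
    \<Rightarrow> ('k \<Rightarrow> 'p \<Rightarrow> 'c option) \<Rightarrow> bool" where
  "collapse_name P leq p C h \<longleftrightarrow>
     (\<forall>a. \<forall>q\<in>P. leq p q \<longrightarrow> (\<exists>r\<in>P. leq q r \<and> h a r \<noteq> None))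
     \<and> (\<forall>a. \<forall>q\<in>P. \<forall>r\<in>P. leq p q \<longrightarrow> leq q r \<longrightarrow> h a q \<noteq> None \<longrightarrow> h a r = h a q)
     \<and> (\<forall>a. \<forall>q\<in>P. leq p q \<longrightarrow> h a q \<noteq> None \<longrightarrow> the (h a q) \<in> C)
     \<and> (\<forall>b\<in>C. \<forall>q\<in>P. leq p q \<longrightarrow> (\<exists>a. \<exists>r\<in>P. leq q r \<and> h a r = Some b))"

text \<open>Forcing with P preserves |C| (here C of size kappa^+): no condition forces
a surjection from kappa onto C.\<close>

definition preserves_card :: "'p set \<Rightarrow> ('p \<Rightarrow> 'p \<Rightarrow> bool) \<Rightarrow> 'k itself \<Rightarrow> 'c set \<Rightarrow> bool" where
  "preserves_card P leq K C \<longleftrightarrow>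
     (\<forall>p\<in>P. \<not> (\<exists>h :: 'k \<Rightarrow> 'p \<Rightarrow> 'c option. collapse_name P leq p C h))"

end

theory Submission
  imports Defs
begin

text \<open>Suppose p forces that f maps kappa onto C. For every alpha the conditions deciding
f(alpha), together with those incompatible with p, form a dense set D(alpha). Running a
kappa-fusion sequence whose step from stage alpha to alpha+1 masters D(alpha) and fusing it
yields one q above p that masters every D(alpha) at once: for each alpha some family of at
most kappa many deciding conditions is predense above q. Every value f(alpha) that an
extension of q can force is then decided by one of these kappa times kappa conditions, so
C has size at most kappa, contradicting |C| = kappa^+.\<close>

lemma no_greatest_if_infinite_card_order:
  assumes "card_order {(x::'k::wellorder, y). x \<le> y}" and "infinite (UNIV :: 'k set)"
  shows "\<forall>x::'k. \<exists>y. x < y"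
proof
  fix a :: 'k
  have co: "Card_order {(x::'k, y). x \<le> y}" and fld: "Field {(x::'k, y). x \<le> y} = UNIV"
    using card_order_on_Card_order[OF assms(1)] by auto
  have "\<exists>b \<in> Field {(x::'k, y). x \<le> y}. a \<noteq> b \<and> (a, b) \<in> {(x, y). x \<le> y}"
    by (rule infinite_Card_order_limit[OF co]) (simp_all add: fld assms(2))
  then show "\<exists>y. a < y" using order.not_eq_order_implies_strict by fastforce
qed

lemma kzero_le: "kzero \<le> (x::'k::wellorder)"
  unfolding kzero_def by (rule Least_le) simp

lemma ksucc_le: "a < b \<Longrightarrow> ksucc a \<le> (b::'k::wellorder)"
  unfolding ksucc_def by (rule Least_le)

lemma po_on_refl: "po_on P R \<Longrightarrow> x \<in> P \<Longrightarrow> R x x"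
  unfolding po_on_def by blast

lemma po_on_trans: "po_on P R \<Longrightarrow> x \<in> P \<Longrightarrow> y \<in> P \<Longrightarrow> z \<in> P \<Longrightarrow> R x y \<Longrightarrow> R y z \<Longrightarrow> R x z"
  unfolding po_on_def by blast

context
  fixes P :: "'p set" and leq :: "'p \<Rightarrow> 'p \<Rightarrow> bool" and lz :: "'k::wellorder \<Rightarrow> 'p \<Rightarrow> 'p \<Rightarrow> bool"
  assumes B: "propertyB P leq lz"
begin

lemma propertyB_po_on: "po_on P leq"
  using B unfolding propertyB_def by blast

lemma propertyB_lz_imp_leq: "x \<in> P \<Longrightarrow> y \<in> P \<Longrightarrow> lz z x y \<Longrightarrow> leq x y"
  using B kzero_le[of z] unfolding propertyB_def by (metis order.not_eq_order_implies_strict)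

lemma propertyB_fusion_limit: "klimit d \<Longrightarrow> fusion_ok P leq lz {z. z < d}"
  using B unfolding propertyB_def by blast

lemma propertyB_fusion_kappa: "fusion_ok P leq lz UNIV"
  using B unfolding propertyB_def by blast

lemma propertyB_mastering:
  "dense P leq D \<Longrightarrow> p \<in> P \<Longrightarrow>
    \<exists>q\<in>P. lz z p q \<and> (\<exists>D' (f :: 'k \<Rightarrow> 'p). D' \<subseteq> D \<and> D' \<subseteq> range f \<and> predense_above P leq D' q)"
  using B unfolding propertyB_def by blast

lemma propertyB_fusion_seqI:
  assumes "\<And>y. y \<in> I \<Longrightarrow> g y \<in> P" and "\<And>y. y \<in> I \<Longrightarrow> lz y (g y) (g (ksucc y))"
    and "\<And>e y. e \<in> I \<Longrightarrow> klimit e \<Longrightarrow> y < e \<Longrightarrow> g y \<in> P \<and> lz y (g y) (g e)"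
  shows "fusion_seq P leq lz I g"
  unfolding fusion_seq_def using assms propertyB_lz_imp_leq by blast

end

context
  assumes no_greatest: "\<forall>x::'k::wellorder. \<exists>y. x < y"
begin

lemma less_ksucc: "a < ksucc (a::'k)"
  unfolding ksucc_def using no_greatest by (meson LeastI_ex)

lemma ksucc_inject: "ksucc a = ksucc b \<Longrightarrow> a = (b::'k)"
  using less_ksucc ksucc_le by (metis leD linorder_neqE)

lemma ksucc_neq_kzero: "ksucc a \<noteq> (kzero::'k)"
  using less_ksucc[of a] kzero_le[of a] by auto

lemma klimit_neq_ksucc: "klimit z \<Longrightarrow> z \<noteq> ksucc (a::'k)"
  unfolding klimit_def using less_ksucc[of a] ksucc_le[of a] by (metis leD)

lemma kzero_ksucc_klimit_cases:
  obtains "z = (kzero::'k)" | a where "z = ksucc a" | "klimit z"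
proof -
  have "klimit z" if "z \<noteq> kzero" "\<forall>a. z \<noteq> ksucc a"
    unfolding klimit_def
    using that less_ksucc ksucc_le by (metis le_neq_trans)
  then show thesis using that by blast
qed

lemma ksucc_less_klimit: "klimit z \<Longrightarrow> y < z \<Longrightarrow> ksucc y < (z::'k)"
  using ksucc_le klimit_neq_ksucc by (metis le_neq_trans)

lemma kzero_ksucc_klimit_recursion:
  obtains f :: "'k \<Rightarrow> 'a" where "f kzero = a0" and "\<And>a. f (ksucc a) = s a (f a)"
    and "\<And>z. klimit z \<Longrightarrow> f z = l z (\<lambda>y. if y < z then f y else undefined)"
proof -
  define F where "F g z = (if z = kzero then a0
    else if \<exists>a. z = ksucc a then s (THE a. z = ksucc a) (g (THE a. z = ksucc a)) else l z g)"
    for g :: "'k \<Rightarrow> 'a" and z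
  define f where "f = wfrec {(x, y). x < y} F"
  have f_eq: "f z = F (\<lambda>y. if y < z then f y else undefined) z" for z
    unfolding f_def by (subst wfrec[OF wf]) (simp add: cut_def)
  have the_ksucc: "(THE a. ksucc b = ksucc a) = b" for b :: 'k
    by (auto dest: ksucc_inject)
  show thesis
  proof (rule that)
    show "f kzero = a0"
      using f_eq by (simp add: F_def)
    show "f (ksucc a) = s a (f a)" for a
    proof -
      have "\<exists>b. ksucc a = ksucc b" by blast
      then show ?thesis
        using f_eq[of "ksucc a"] by (simp add: F_def ksucc_neq_kzero the_ksucc less_ksucc)
    qed
    show "f z = l z (\<lambda>y. if y < z then f y else undefined)" if "klimit z" for z
      using f_eq[of z] that klimit_neq_ksucc by (auto simp: F_def klimit_def)
  qed
qed

lemma propertyB_fusion_run: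
  fixes lz :: "'k \<Rightarrow> 'p \<Rightarrow> 'p \<Rightarrow> bool"
  assumes B: "propertyB P leq lz" and "p \<in> P"
    and step: "\<And>z x. x \<in> P \<Longrightarrow> \<exists>y\<in>P. lz z x y \<and> Q z y"
  obtains g where "fusion_seq P leq lz UNIV g" and "g kzero = p" and "\<And>z. Q z (g (ksucc z))"
proof -
  define S where "S z x = (SOME y. y \<in> P \<and> lz z x y \<and> Q z y)" for z x
  define L where "L z g = (SOME q. q \<in> P \<and> (\<forall>y<z. lz y (g y) q))" for z and g :: "'k \<Rightarrow> 'p"
  obtain g where g_kzero: "g kzero = p" and g_ksucc: "\<And>a. g (ksucc a) = S a (g a)"
    and g_klimit: "\<And>z. klimit z \<Longrightarrow> g z = L z (\<lambda>y. if y < z then g y else undefined)"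
    by (rule kzero_ksucc_klimit_recursion[of p S L]) blast
  have S: "S z x \<in> P \<and> lz z x (S z x) \<and> Q z (S z x)" if "x \<in> P" for z x
    using step[OF that, of z] unfolding S_def Bex_def by (rule someI_ex)
  have L: "L z h \<in> P \<and> (\<forall>y<z. lz y (h y) (L z h))"
    if "klimit z" and "fusion_seq P leq lz {y. y < z} h" for z h
  proof -
    have "\<exists>q. q \<in> P \<and> (\<forall>y<z. lz y (h y) q)"
      using propertyB_fusion_limit[OF B that(1)] that(2) unfolding fusion_ok_def by auto
    then show ?thesis unfolding L_def by (rule someI_ex)
  qed
  have succ: "lz y (g y) (g (ksucc y)) \<and> Q y (g (ksucc y))" if "g y \<in> P" for y
    using S[OF that] g_ksucc by simp
  have run: "g z \<in> P \<and> (klimit z \<longrightarrow> (\<forall>y<z. lz y (g y) (g z)))" for z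
  proof (induction z rule: less_induct)
    case (less z)
    show ?case
    proof (cases z rule: kzero_ksucc_klimit_cases)
      case 1
      then show ?thesis using g_kzero \<open>p \<in> P\<close> by (simp add: klimit_def)
    next
      case (2 a)
      have "g a \<in> P" using 2 less less_ksucc by blast
      moreover have "\<not> klimit z" using 2 klimit_neq_ksucc by blast
      ultimately show ?thesis using 2 S g_ksucc by simp
    next
      case 3
      let ?h = "\<lambda>y. if y < z then g y else undefined"
      have "fusion_seq P leq lz {y. y < z} ?h"
        using less succ ksucc_less_klimit[OF 3] by (intro propertyB_fusion_seqI[OF B]) auto
      from L[OF 3 this] show ?thesis using g_klimit[OF 3] by auto
    qed
  qed
  show thesis
  proof (rule that)
    show "fusion_seq P leq lz UNIV g"
      using run succ by (intro propertyB_fusion_seqI[OF B]) auto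
  qed (use g_kzero succ run in auto)
qed

lemma propertyB_meets_requirements:
  fixes lz :: "'k \<Rightarrow> 'p \<Rightarrow> 'p \<Rightarrow> bool"
  assumes B: "propertyB P leq lz" and "p \<in> P"
    and step: "\<And>z x. x \<in> P \<Longrightarrow> \<exists>y\<in>P. lz z x y \<and> Q z y"
    and upward: "\<And>z y y'. Q z y \<Longrightarrow> y \<in> P \<Longrightarrow> y' \<in> P \<Longrightarrow> leq y y' \<Longrightarrow> Q z y'"
  shows "\<exists>q\<in>P. leq p q \<and> (\<forall>z. Q z q)"
proof -
  obtain g where g: "fusion_seq P leq lz UNIV g" and "g kzero = p" and Q: "\<And>z. Q z (g (ksucc z))"
    using propertyB_fusion_run[OF B \<open>p \<in> P\<close> step] by blast
  have g_in: "g z \<in> P" for z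
    using g unfolding fusion_seq_def by blast
  obtain q where "q \<in> P" and q: "\<And>z. lz z (g z) q"
    using propertyB_fusion_kappa[OF B] g unfolding fusion_ok_def by blast
  have "leq (g z) q" for z
    using propertyB_lz_imp_leq[OF B g_in \<open>q \<in> P\<close> q] .
  then show ?thesis
    using \<open>q \<in> P\<close> \<open>g kzero = p\<close> g_in Q upward by metis
qed

end

lemma predense_above_superset:
  "D \<subseteq> E \<Longrightarrow> predense_above P leq D q \<Longrightarrow> predense_above P leq E q"
  unfolding predense_above_def by blast

lemma predense_above_extension:
  assumes "po_on P leq" and "q \<in> P" and "q' \<in> P" and "leq q q'"
    and "predense_above P leq D q"
  shows "predense_above P leq D q'"
  using assms po_on_trans unfolding predense_above_def by metis

text \<open>Conditions incompatible with p are admitted so that the set is dense in all of P.\<close>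

definition deciders :: "'p set \<Rightarrow> ('p \<Rightarrow> 'p \<Rightarrow> bool) \<Rightarrow> 'p \<Rightarrow> ('k \<Rightarrow> 'p \<Rightarrow> 'c option) \<Rightarrow> 'k \<Rightarrow> 'p set"
  where "deciders P leq p h a = {r \<in> P. (leq p r \<and> h a r \<noteq> None) \<or> \<not> compatible P leq p r}"

lemma dense_deciders:
  assumes po: "po_on P leq" and cn: "collapse_name P leq p C h" and "p \<in> P"
  shows "dense P leq (deciders P leq p h a)"
  unfolding dense_def
proof (intro conjI ballI)
  show "deciders P leq p h a \<subseteq> P"
    unfolding deciders_def by blast
  fix x assume "x \<in> P"
  show "\<exists>d\<in>deciders P leq p h a. leq x d"
  proof (cases "compatible P leq p x")
    case True
    then obtain s where "s \<in> P" "leq p s" "leq x s"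
      unfolding compatible_def by blast
    moreover obtain r where "r \<in> P" "leq s r" "h a r \<noteq> None"
      using cn \<open>s \<in> P\<close> \<open>leq p s\<close> unfolding collapse_name_def by blast
    ultimately have "leq p r" and "leq x r" and "h a r \<noteq> None"
      using po_on_trans[OF po] \<open>p \<in> P\<close> \<open>x \<in> P\<close> by blast+
    then show ?thesis
      using \<open>r \<in> P\<close> unfolding deciders_def by blast
  next
    case False
    then show ?thesis
      using \<open>x \<in> P\<close> po_on_refl[OF po] unfolding deciders_def by blast
  qed
qed

lemma collapse_name_values_covered:
  assumes po: "po_on P leq" and cn: "collapse_name P leq p C h"
    and "p \<in> P" and "q \<in> P" and "leq p q"
    and predense: "\<And>a. predense_above P leq (deciders P leq p h a \<inter> range (f a)) q"
  shows "C \<subseteq> (\<lambda>(a, i). the (h a (f a i))) ` (UNIV \<times> UNIV)"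
proof
  fix b assume "b \<in> C"
  then obtain a r where "r \<in> P" "leq q r" "h a r = Some b"
    using cn \<open>q \<in> P\<close> \<open>leq p q\<close> unfolding collapse_name_def by blast
  then obtain d s where d: "d \<in> deciders P leq p h a" "d \<in> range (f a)"
    and "s \<in> P" "leq r s" "leq d s"
    using predense unfolding predense_above_def compatible_def by blast
  have "leq p r" and "leq p s"
    using po_on_trans[OF po] \<open>p \<in> P\<close> \<open>q \<in> P\<close> \<open>r \<in> P\<close> \<open>s \<in> P\<close> \<open>leq p q\<close> \<open>leq q r\<close> \<open>leq r s\<close>
    by blast+
  then have "compatible P leq p d"
    using \<open>s \<in> P\<close> \<open>leq d s\<close> unfolding compatible_def by blast
  then have "d \<in> P" and "leq p d" and "h a d \<noteq> None"
    using d(1) unfolding deciders_def by auto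
  \<comment> \<open>r and d have the common extension s, so they force the same value at a.\<close>
  then have "h a d = h a s"
    using cn \<open>s \<in> P\<close> \<open>leq d s\<close> unfolding collapse_name_def by metis
  also have "\<dots> = Some b"
    using cn \<open>r \<in> P\<close> \<open>s \<in> P\<close> \<open>leq p r\<close> \<open>leq r s\<close> \<open>h a r = Some b\<close>
    unfolding collapse_name_def by (metis option.distinct(1))
  finally have "h a d = Some b" .
  moreover obtain i where "d = f a i"
    using d(2) by blast
  ultimately show "b \<in> (\<lambda>(a, i). the (h a (f a i))) ` (UNIV \<times> UNIV)"
    by (auto intro: image_eqI[where x = "(a, i)"])
qed

lemma not_ordIso_cardSuc_if_covered_by_square:
  assumes "infinite A" and "C \<subseteq> g ` (A \<times> A)"
  shows "\<not> ordIso2 (card_of C) (cardSuc (card_of A))"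
proof
  assume iso: "ordIso2 (card_of C) (cardSuc (card_of A))"
  have "ordLeq2 (card_of C) (card_of (A \<times> A))"
    using card_of_mono1[OF assms(2)] card_of_image ordLeq_transitive by blast
  moreover have "ordIso2 (card_of (A \<times> A)) (card_of A)"
    using card_of_Times_same_infinite[OF assms(1)] .
  moreover have "ordLess2 (card_of A) (cardSuc (card_of A))"
    using cardSuc_greater card_of_Card_order by blast
  ultimately have "ordLess2 (card_of C) (card_of C)"
    using ordIso_symmetric[OF iso] ordLeq_ordIso_trans ordLeq_ordLess_trans ordLess_ordIso_trans
    by metis
  then show False
    using ordLess_irreflexive by blast
qed

lemma propertyB_masters_all_deciders:
  fixes lz :: "'k::wellorder \<Rightarrow> 'p \<Rightarrow> 'p \<Rightarrow> bool" and h :: "'k \<Rightarrow> 'p \<Rightarrow> 'c option"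
  assumes "\<forall>x::'k. \<exists>y. x < y" and B: "propertyB P leq lz"
    and cn: "collapse_name P leq p C h" and "p \<in> P"
  obtains q and f :: "'k \<Rightarrow> 'k \<Rightarrow> 'p" where "q \<in> P" and "leq p q"
    and "\<And>a. predense_above P leq (deciders P leq p h a \<inter> range (f a)) q"
proof -
  note po = propertyB_po_on[OF B]
  define Q where "Q a q \<longleftrightarrow> (\<exists>f :: 'k \<Rightarrow> 'p. predense_above P leq (deciders P leq p h a \<inter> range f) q)"
    for a q
  have "\<exists>q\<in>P. leq p q \<and> (\<forall>a. Q a q)"
  proof (rule propertyB_meets_requirements[OF assms(1) B \<open>p \<in> P\<close>])
    show "\<exists>y\<in>P. lz a x y \<and> Q a y" if "x \<in> P" for a x
      using propertyB_mastering[OF B dense_deciders[OF po cn \<open>p \<in> P\<close>] that]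
      unfolding Q_def by (meson Int_subset_iff predense_above_superset)
    show "Q a y'" if "Q a y" "y \<in> P" "y' \<in> P" "leq y y'" for a y y'
      using that predense_above_extension[OF po] unfolding Q_def by blast
  qed
  then show thesis
    using that unfolding Q_def by metis
qed

theorem lemma3p4:
  fixes P :: "'p set" and leq :: "'p \<Rightarrow> 'p \<Rightarrow> bool"
    and lz :: "'k::wellorder \<Rightarrow> 'p \<Rightarrow> 'p \<Rightarrow> bool" and C :: "'c set"
  assumes "card_order {(x::'k, y). x \<le> y}"
    and "infinite (UNIV :: 'k set)"
    and "ordIso2 (card_of C) (cardSuc (card_of (UNIV :: 'k set)))"
    and "propertyB P leq lz"
  shows "preserves_card P leq TYPE('k) C"
  unfolding preserves_card_def
proof (intro ballI notI)
  fix p assume "p \<in> P" and "\<exists>h :: 'k \<Rightarrow> 'p \<Rightarrow> 'c option. collapse_name P leq p C h"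
  then obtain h :: "'k \<Rightarrow> 'p \<Rightarrow> 'c option" where cn: "collapse_name P leq p C h" by blast
  obtain q and f :: "'k \<Rightarrow> 'k \<Rightarrow> 'p" where "q \<in> P" and "leq p q"
    and "\<And>a. predense_above P leq (deciders P leq p h a \<inter> range (f a)) q"
    by (rule propertyB_masters_all_deciders[OF no_greatest_if_infinite_card_order[OF assms(1,2)]
        assms(4) cn \<open>p \<in> P\<close>]) blast
  then have "C \<subseteq> (\<lambda>(a, i). the (h a (f a i))) ` (UNIV \<times> UNIV)"
    using collapse_name_values_covered[OF propertyB_po_on[OF assms(4)] cn \<open>p \<in> P\<close>] by blast
  then show False
    using not_ordIso_cardSuc_if_covered_by_square assms(2,3) by blast
qed

end
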